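(* There exist a function $g:\mathbb{N}\to\mathbb{R}$ with $g(n)=o(n)$ and, for every $n\ge 1$, an injective map from the set of AVL trees with $n$ nodes to the set of finite binary strings such that every codeword has length at most $0.99933\,n+g(n)$. In words: there is a static encoding of AVL trees using at most $0.99933n+o(n)$ bits for AVL trees with $n$ nodes.
   Context: A binary tree is a rooted tree in which every node has an (optional) left child and an (optional) right child. The height of a tree is the number of edges on a longest path from the root to a leaf; the empty tree has height $-1$. An AVL tree is a binary tree such that at every node the heights of the left subtree and the right subtree differ by at most $1$ (empty subtrees included). *)

theory Defs
  imports Main "HOL-Library.Tree" "HOL-Library.Landau_Symbols"
begin

text \<open>The library height
  counts nodes on a longest root-leaf path (Leaf has height 0), i.e. it is the
  paper's height plus one; differences of heights are unaffected.\<close>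

fun avl :: "unit tree \<Rightarrow> bool" where
  "avl Leaf = True"
| "avl (Node l _ r) =
     (\<bar>int (height l) - int (height r)\<bar> \<le> 1 \<and> avl l \<and> avl r)"

end

theory Submission
  imports Defs
begin

text \<open>A finite set of \<open>N\<close> objects injects into the bit strings of length \<open>L\<close> whenever
  \<open>N \<le> 2 ^ L\<close>, so it suffices to count AVL trees. Weight a tree \<open>t\<close> by \<open>x ^ size t\<close>. The
  total weight \<open>W(h)\<close> of the AVL trees of height \<open>h\<close> obeys
  \<open>W(h+2) = x (W(h+1)\<^sup>2 + 2 W(h+1) W(h))\<close>, because the subtrees of the root have heights
  \<open>(h+1, h+1)\<close>, \<open>(h+1, h)\<close> or \<open>(h, h+1)\<close>. At \<open>x = 0.51\<close> an explicit supersolution of this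
  recurrence shows \<open>W(h) \<le> 1\<close> for all \<open>h\<close>. Hence for each of the at most \<open>n + 1\<close> possible
  heights there are at most \<open>(100/51)\<^sup>n\<close> AVL trees with \<open>n\<close> nodes, and
  \<open>(n + 1) (100/51)\<^sup>n \<le> 2 ^ (\<lceil>0.99 n\<rceil> + 7)\<close>.\<close>

lemma finite_trees_height_le: "finite {t :: 'a::finite tree. height t \<le> h}"
proof (induction h)
  case 0
  have "{t :: 'a tree. height t \<le> 0} = {Leaf}" by auto
  then show ?case by simp
next
  case (Suc h)
  let ?T = "{t :: 'a tree. height t \<le> h}"
  have "{t :: 'a tree. height t \<le> Suc h} \<subseteq>
      insert Leaf ((\<lambda>(l, a, r). Node l a r) ` (?T \<times> UNIV \<times> ?T))"
  proof
    fix t :: "'a tree" assume "t \<in> {t. height t \<le> Suc h}"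
    then show "t \<in> insert Leaf ((\<lambda>(l, a, r). Node l a r) ` (?T \<times> UNIV \<times> ?T))"
      by (cases t) (auto simp: image_iff)
  qed
  then show ?case using Suc by (auto intro: finite_subset)
qed

definition avl_height :: "nat \<Rightarrow> unit tree set" where
  "avl_height h = {t. avl t \<and> height t = h}"

lemma finite_avl_height: "finite (avl_height h)"
  by (rule finite_subset[OF _ finite_trees_height_le[of h]]) (auto simp: avl_height_def)

lemma avl_height_0: "avl_height 0 = {Leaf}"
  by (auto simp: avl_height_def)

lemma avl_height_1: "avl_height (Suc 0) = {Node Leaf () Leaf}"
proof -
  have "t = Node Leaf () Leaf" if "avl t" "height t = 1" for t :: "unit tree"
    using that by (cases t) (auto simp: max_def split: if_splits)
  then show ?thesis by (auto simp: avl_height_def)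
qed

lemma avl_height_Suc_Suc:
  "avl_height (Suc (Suc h)) = (\<lambda>(l, r). Node l () r) `
     (avl_height (Suc h) \<times> avl_height (Suc h) \<union> avl_height (Suc h) \<times> avl_height h
      \<union> avl_height h \<times> avl_height (Suc h))"
  (is "_ = _ ` ?P")
proof
  show "avl_height (Suc (Suc h)) \<subseteq> (\<lambda>(l, r). Node l () r) ` ?P"
  proof
    fix t assume "t \<in> avl_height (Suc (Suc h))"
    then obtain l r where t: "t = Node l () r" "avl l" "avl r"
      and height: "max (height l) (height r) = Suc h"
      and balanced: "\<bar>int (height l) - int (height r)\<bar> \<le> 1"
      by (cases t) (auto simp: avl_height_def)
    from height balanced have "(l, r) \<in> ?P"
      using t by (auto simp: avl_height_def max_def split: if_splits)
    with t show "t \<in> (\<lambda>(l, r). Node l () r) ` ?P" by force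
  qed
qed (auto simp: avl_height_def)

definition avl_weight :: "real \<Rightarrow> nat \<Rightarrow> real" where
  "avl_weight x h = (\<Sum>t\<in>avl_height h. x ^ size t)"

lemma avl_weight_0: "avl_weight x 0 = 1"
  by (simp add: avl_weight_def avl_height_0)

lemma avl_weight_1: "avl_weight x (Suc 0) = x"
  by (simp add: avl_weight_def avl_height_1)

lemma avl_weight_nonneg: "0 \<le> x \<Longrightarrow> 0 \<le> avl_weight x h"
  unfolding avl_weight_def by (rule sum_nonneg) simp

lemma sum_cartesian_product_mult:
  "(\<Sum>(a, b)\<in>A \<times> B. f a * g b) = sum f A * (sum g B :: 'a::comm_semiring_0)"
  by (simp add: sum.cartesian_product[symmetric] sum_product)

lemma avl_weight_Suc_Suc:
  "avl_weight x (Suc (Suc h)) =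
     x * (avl_weight x (Suc h) ^ 2 + 2 * avl_weight x (Suc h) * avl_weight x h)"
proof -
  let ?A = "avl_height (Suc h)" and ?B = "avl_height h"
  let ?w = "\<lambda>t. x ^ size t"
  have disjoint: "(?A \<times> ?A \<union> ?A \<times> ?B) \<inter> ?B \<times> ?A = {}" "?A \<times> ?A \<inter> ?A \<times> ?B = {}"
    by (auto simp: avl_height_def)
  have "inj_on (\<lambda>(l, r). Node l () r) X" for X :: "(unit tree \<times> unit tree) set"
    by (auto simp: inj_on_def)
  then have "avl_weight x (Suc (Suc h)) =
      (\<Sum>(l, r)\<in>?A \<times> ?A \<union> ?A \<times> ?B \<union> ?B \<times> ?A. x * (?w l * ?w r))"
    unfolding avl_weight_def avl_height_Suc_Suc
    by (subst sum.reindex) (auto simp: power_add intro!: sum.cong)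
  also have "\<dots> = x * ((\<Sum>(l, r)\<in>?A \<times> ?A. ?w l * ?w r) + (\<Sum>(l, r)\<in>?A \<times> ?B. ?w l * ?w r)
      + (\<Sum>(l, r)\<in>?B \<times> ?A. ?w l * ?w r))"
    using disjoint by (simp add: sum.union_disjoint finite_avl_height
        sum_distrib_left[symmetric] case_prod_beta distrib_left)
  finally show ?thesis
    unfolding sum_cartesian_product_mult avl_weight_def[symmetric]
    by (simp add: algebra_simps power2_eq_square)
qed

lemma avl_weight_le_supersolution:
  assumes "0 \<le> x" and "1 \<le> u 0" and "x \<le> u 1"
    and step: "\<And>h. x * (u (Suc h) ^ 2 + 2 * u (Suc h) * u h) \<le> u (Suc (Suc h))"
  shows "avl_weight x h \<le> u h"
proof -
  have "avl_weight x h \<le> u h \<and> avl_weight x (Suc h) \<le> u (Suc h)"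
  proof (induction h)
    case 0
    with assms show ?case by (simp add: avl_weight_0 avl_weight_1)
  next
    case (Suc h)
    then have IH: "avl_weight x h \<le> u h" "avl_weight x (Suc h) \<le> u (Suc h)" by auto
    have nonneg: "0 \<le> avl_weight x h" "0 \<le> avl_weight x (Suc h)"
      using \<open>0 \<le> x\<close> by (simp_all add: avl_weight_nonneg)
    have "avl_weight x (Suc (Suc h)) \<le> x * (u (Suc h) ^ 2 + 2 * u (Suc h) * u h)"
      unfolding avl_weight_Suc_Suc using IH nonneg \<open>0 \<le> x\<close>
      by (intro mult_left_mono add_mono power_mono mult_mono) auto
    also have "\<dots> \<le> u (Suc (Suc h))" by (rule step)
    finally show ?case using IH by simp
  qed
  then show ?thesis ..
qed

text \<open>The table iterates the recurrence at \<open>x = 0.51\<close> from \<open>(1, 0.51)\<close>, rounding up;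
  once it reaches \<open>0.06\<close> it can stay constant, as \<open>0.51 \<cdot> 3 \<cdot> 0.06\<^sup>2 \<le> 0.06\<close>.\<close>

definition avl_weight_bound :: "nat \<Rightarrow> real" where
  "avl_weight_bound h =
     (if h < 10 then [1, 0.51, 0.66, 0.57, 0.55, 0.48, 0.39, 0.27, 0.15, 0.06] ! h else 0.06)"

lemma avl_weight_bound_step:
  "51/100 * (avl_weight_bound (Suc h) ^ 2 + 2 * avl_weight_bound (Suc h) * avl_weight_bound h)
     \<le> avl_weight_bound (Suc (Suc h))"
proof (cases "h < 9")
  case True
  then have "h \<in> {0, 1, 2, 3, 4, 5, 6, 7, 8}" by auto
  then show ?thesis by (auto simp: avl_weight_bound_def power2_eq_square)
qed (simp add: avl_weight_bound_def power2_eq_square)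

lemma avl_weight_bound_le_1: "avl_weight_bound h \<le> 1"
proof (cases "h < 10")
  case True
  then have "h \<in> {0, 1, 2, 3, 4, 5, 6, 7, 8, 9}" by auto
  then show ?thesis by (auto simp: avl_weight_bound_def)
qed (simp add: avl_weight_bound_def)

lemma avl_weight_51_le_1: "avl_weight (51/100) h \<le> 1"
proof -
  have "avl_weight (51/100) h \<le> avl_weight_bound h"
    using avl_weight_le_supersolution[where u = avl_weight_bound, OF _ _ _ avl_weight_bound_step]
    by (simp add: avl_weight_bound_def)
  then show ?thesis using avl_weight_bound_le_1 order_trans by blast
qed

lemma card_avl_height_size_le:
  assumes "0 < x"
  shows "real (card {t \<in> avl_height h. size t = n}) * x ^ n \<le> avl_weight x h"
proof -
  have "real (card {t \<in> avl_height h. size t = n}) * x ^ n =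
      (\<Sum>t | t \<in> avl_height h \<and> size t = n. x ^ size t)"
    by simp
  also have "\<dots> \<le> avl_weight x h"
    unfolding avl_weight_def using assms by (intro sum_mono2 finite_avl_height) auto
  finally show ?thesis .
qed

lemma avl_size_subset: "{t. avl t \<and> size t = n} \<subseteq> (\<Union>h\<le>n. {t \<in> avl_height h. size t = n})"
  using height_le_size_tree by (fastforce simp: avl_height_def)

lemma finite_avl_size: "finite {t. avl t \<and> size t = n}"
  by (rule finite_subset[OF avl_size_subset]) (simp add: finite_avl_height)

lemma card_avl_size_le: "real (card {t. avl t \<and> size t = n}) \<le> (real n + 1) * (100/51) ^ n"
proof -
  have per_height: "real (card {t \<in> avl_height h. size t = n}) \<le> (100/51) ^ n" for h
    using card_avl_height_size_le[of "51/100" h n] avl_weight_51_le_1[of h]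
    by (simp add: power_divide field_simps order_trans)
  have "card {t. avl t \<and> size t = n} \<le> card (\<Union>h\<le>n. {t \<in> avl_height h. size t = n})"
    by (intro card_mono avl_size_subset) (simp add: finite_avl_height)
  also have "\<dots> \<le> (\<Sum>h\<le>n. card {t \<in> avl_height h. size t = n})"
    by (rule card_UN_le) simp
  finally have "real (card {t. avl t \<and> size t = n}) \<le>
      (\<Sum>h\<le>n. real (card {t \<in> avl_height h. size t = n}))"
    by (simp flip: of_nat_sum)
  also have "\<dots> \<le> (\<Sum>h\<le>n. (100/51) ^ n)"
    by (intro sum_mono per_height)
  finally show ?thesis by (simp add: algebra_simps)
qed

lemma ratio_101_51_le_powr: "101/51 \<le> (2::real) powr (99/100)"
proof (rule power_le_imp_le_base[of _ 99])
  have "(101/51::real) ^ Suc 99 \<le> 2 ^ 99"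
    by (simp add: power_divide divide_le_eq)
  also have "\<dots> = 2 powr real 99"
    by (rule powr_realpow[symmetric]) simp
  also have "\<dots> = (2 powr (99/100)) ^ Suc 99"
    by (subst powr_power) simp_all
  finally show "(101/51) ^ Suc 99 \<le> (2 powr (99/100::real)) ^ Suc 99" .
qed simp

lemma succ_mult_power_100_51_le_power_2:
  "(real n + 1) * (100/51) ^ n \<le> 2 ^ (nat \<lceil>99/100 * real n\<rceil> + 7)"
proof -
  have "1 + real n * (1/100) \<le> (1 + 1/100 :: real) ^ n"
    by (rule Bernoulli_inequality) simp
  then have "(real n + 1) * (100/51) ^ n \<le> 100 * (101/100) ^ n * (100/51) ^ n"
    by (intro mult_right_mono) simp_all
  also have "\<dots> = 100 * (101/51) ^ n"
    by (simp add: mult.assoc flip: power_mult_distrib)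
  also have "\<dots> \<le> 2 ^ 7 * (2 powr (99/100)) ^ n"
    using ratio_101_51_le_powr by (intro mult_mono power_mono) auto
  also have "(2 powr (99/100)) ^ n = (2::real) powr (99/100 * real n)"
    by (simp add: powr_power mult.commute)
  also have "\<dots> \<le> 2 powr real (nat \<lceil>99/100 * real n\<rceil>)"
    by (intro powr_mono) linarith+
  also have "\<dots> = 2 ^ nat \<lceil>99/100 * real n\<rceil>"
    by (rule powr_realpow) simp
  finally show ?thesis
    by (simp add: power_add mult.commute)
qed

lemma card_avl_size_le_pow2:
  "card {t. avl t \<and> size t = n} \<le> 2 ^ (nat \<lceil>99/100 * real n\<rceil> + 7)"
proof -
  have "real (card {t. avl t \<and> size t = n}) \<le> 2 ^ (nat \<lceil>99/100 * real n\<rceil> + 7)"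
    using card_avl_size_le succ_mult_power_100_51_le_power_2 by (rule order_trans)
  then show ?thesis
    by (metis of_nat_le_iff of_nat_numeral of_nat_power)
qed

lemma inj_on_bool_lists_of_length:
  assumes "finite A" and "card A \<le> 2 ^ L"
  obtains enc :: "'a \<Rightarrow> bool list" where "inj_on enc A" and "\<forall>x\<in>A. length (enc x) = L"
proof -
  let ?B = "{xs. set xs \<subseteq> (UNIV :: bool set) \<and> length xs = L}"
  have "finite ?B"
    by (rule finite_lists_length_eq) simp
  moreover have "card ?B = 2 ^ L"
    using card_lists_length_eq[of "UNIV :: bool set" L] by simp
  ultimately obtain enc where "enc ` A \<subseteq> ?B" "inj_on enc A"
    using card_le_inj[OF assms(1)] assms(2) by metis
  then show ?thesis
    by (intro that) auto
qed

theorem theorem1: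
  shows "\<exists>g :: nat \<Rightarrow> real. g \<in> o(\<lambda>n. real n) \<and>
    (\<forall>n \<ge> 1. \<exists>enc :: unit tree \<Rightarrow> bool list.
       inj_on enc {t. avl t \<and> size t = n} \<and>
       (\<forall>t \<in> {t. avl t \<and> size t = n}.
          real (length (enc t)) \<le> 0.99933 * real n + g n))"
proof (intro exI[of _ "\<lambda>_. 8"] conjI allI impI)
  show "(\<lambda>_. 8) \<in> o(\<lambda>n. real n)"
    by (rule smalloI_tendsto) (auto intro: lim_const_over_n eventually_gt_at_top)
next
  fix n :: nat
  let ?L = "nat \<lceil>99/100 * real n\<rceil> + 7"
  obtain enc :: "unit tree \<Rightarrow> bool list" where "inj_on enc {t. avl t \<and> size t = n}"
    and "\<forall>t\<in>{t. avl t \<and> size t = n}. length (enc t) = ?L"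
    using inj_on_bool_lists_of_length[OF finite_avl_size card_avl_size_le_pow2] by blast
  moreover have "real ?L \<le> 0.99933 * real n + 8"
    using ceiling_correct[of "99/100 * real n"] by (simp add: of_nat_nat)
  ultimately show "\<exists>enc :: unit tree \<Rightarrow> bool list. inj_on enc {t. avl t \<and> size t = n} \<and>
      (\<forall>t\<in>{t. avl t \<and> size t = n}. real (length (enc t)) \<le> 0.99933 * real n + 8)"
    by auto
qed

end
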